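(* Let $T(n) = (3n+1)/2^{v_2(3n+1)}$ for odd $n \ge 1$. For an odd positive integer $n \equiv 1 \pmod 4$, say that $n$ produces $(L,G) = (1,1)$ if $T(n) \equiv 3 \pmod 4$ and $T(T(n)) \equiv 1 \pmod 4$. For $n_0 = 64a + r$ with integer $a \ge 0$ and $r \in \{5,13,21,29,37,45,53,61\}$: (a) if $r = 29$, then $n_0$ produces $(L,G)=(1,1)$ for every $a$; (b) if $r = 21$, then $n_0$ produces $(L,G)=(1,1)$ if and only if $\mathrm{oddpart}(3a+1) \equiv 3 \pmod 8$; (c) if $r = 37$, then $n_0$ produces $(L,G)=(1,1)$ if and only if $a$ is odd; (d) if $r = 53$, then $n_0$ produces $(L,G)=(1,1)$ if and only if $a \equiv 1 \pmod 4$; (e) if $r \in \{5,13,45,61\}$, then $n_0$ does not produce $(L,G)=(1,1)$ for any $a$.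
   Context: $v_2$ is the $2$-adic valuation and $\mathrm{oddpart}(x) = x/2^{v_2(x)}$ for a positive integer $x$. In terms of the orbit $n_0, T(n_0), T^2(n_0),\dots$ with burst indicator $X_t = \mathbf{1}[n_t\equiv 1 \pmod 4]$, $(L,G)=(1,1)$ means the burst run starting at $n_0$ has length $L=1$ and the following gap run has length $G=1$. *)

theory Defs
  imports "HOL-Computational_Algebra.Primes"
begin

definition v2 :: "nat \<Rightarrow> nat" where
  "v2 x = multiplicity (2::nat) x"

definition oddpart :: "nat \<Rightarrow> nat" where
  "oddpart x = x div 2 ^ v2 x"

definition T :: "nat \<Rightarrow> nat" where
  "T n = oddpart (3 * n + 1)"

definition produces11 :: "nat \<Rightarrow> bool" where
  "produces11 n \<longleftrightarrow> T n mod 4 = 3 \<and> T (T n) mod 4 = 1"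

end

theory Submission
  imports Defs
begin

text \<open>A Syracuse step from n \<equiv> 3 mod 4 divides by exactly 2, so producing (L,G) = (1,1) depends
  only on T n mod 8: it happens iff T n \<equiv> 3 mod 8. It then suffices to compute T(64a + r): for
  r \<noteq> 21 the power of 2 dividing 3(64a + r) + 1 = 192a + 3r + 1 is at most 32 and is read off
  from 3r + 1, while for r = 21 the factor 64 leaves the odd part of 3a + 1.\<close>

lemma oddpart_mult_power2: "m > 0 \<Longrightarrow> oddpart (2 ^ k * m) = oddpart m"
  unfolding oddpart_def v2_def
  by (simp add: prime_elem_multiplicity_mult_distrib power_add)

lemma oddpart_odd: "odd m \<Longrightarrow> oddpart m = m"
  unfolding oddpart_def v2_def by (simp add: not_dvd_imp_multiplicity_0)

lemma T_eqI:
  assumes "3 * n + 1 = 2 ^ k * m" and "odd m"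
  shows "T n = m"
proof -
  have "m > 0" using \<open>odd m\<close> by (rule odd_pos)
  then show ?thesis
    unfolding T_def assms(1) by (simp add: oddpart_mult_power2 oddpart_odd \<open>odd m\<close>)
qed

lemma T_4k_plus_3: "T (4 * k + 3) = 6 * k + 5"
  by (rule T_eqI[of _ 1]) simp_all

lemma mod4_eq_3_and_T_mod4_eq_1_iff: "n mod 4 = 3 \<and> T n mod 4 = 1 \<longleftrightarrow> n mod 8 = 3"
proof (cases "n mod 4 = 3")
  case True
  then obtain k where "n = 4 * k + 3"
    by (metis div_mult_mod_eq mult.commute)
  then show ?thesis by (simp add: T_4k_plus_3) presburger
next
  case False
  then show ?thesis by presburger
qed

lemma produces11_iff_T_mod8: "produces11 n \<longleftrightarrow> T n mod 8 = 3"
  unfolding produces11_def by (rule mod4_eq_3_and_T_mod4_eq_1_iff)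

theorem proposition5p1:
  fixes a r :: nat
  shows "produces11 (64 * a + 29)
    \<and> (produces11 (64 * a + 21) \<longleftrightarrow> oddpart (3 * a + 1) mod 8 = 3)
    \<and> (produces11 (64 * a + 37) \<longleftrightarrow> odd a)
    \<and> (produces11 (64 * a + 53) \<longleftrightarrow> a mod 4 = 1)
    \<and> (r \<in> {5, 13, 45, 61} \<longrightarrow> \<not> produces11 (64 * a + r))"
proof -
  have "T (64 * a + 21) = oddpart (3 * a + 1)"
    unfolding T_def using oddpart_mult_power2[of "3 * a + 1" 6] by simp
  moreover have
    "T (64 * a + 29) = 24 * a + 11" "T (64 * a + 13) = 24 * a + 5"
    "T (64 * a + 45) = 24 * a + 17" "T (64 * a + 61) = 24 * a + 23"
    by (rule T_eqI[of _ 3]; simp)+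
  moreover have "T (64 * a + 37) = 12 * a + 7" "T (64 * a + 5) = 12 * a + 1"
    by (rule T_eqI[of _ 4]; simp)+
  moreover have "T (64 * a + 53) = 6 * a + 5"
    by (rule T_eqI[of _ 5]) simp_all
  ultimately show ?thesis
    unfolding produces11_iff_T_mod8 by auto presburger+
qed

end
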